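(* Let $G$ be a group and $A$ a minimax-antifinitary $\mathbb{Z}G$-module. If $H$ is a proper subgroup of $G$ which is not contained in $\mathbf{Coc}_{\mathbb{Z}\text{-mmx}}(G)$, then $H$ is finitely generated.
   Context: An $R$-module is minimax if it has a finite series of submodules whose factors are each noetherian or artinian. For a subgroup $H$ of $G$, $C_A(H)$ is the set of elements of $A$ fixed by all of $H$. $\mathbf{Coc}_{\mathbb{Z}\text{-mmx}}(G) = \{x \in G \mid A/C_A(x) \text{ is a minimax } \mathbb{Z}\text{-module}\}$. A $\mathbb{Z}G$-module $A$ is minimax-antifinitary if $A/C_A(H)$ is a minimax $\mathbb{Z}$-module for every proper subgroup $H$ of $G$ that is not finitely generated, while $A/C_A(G)$ is not a minimax $\mathbb{Z}$-module. *)

theory Defs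
  imports "HOL-Algebra.Algebra"
begin

text \<open>Abelian groups are written multiplicatively (HOL-Algebra convention);
  a Z-module is just an abelian group, and Z-submodules are exactly subgroups.\<close>

definition noetherian_group :: "'c monoid \<Rightarrow> bool" where
  "noetherian_group M \<longleftrightarrow>
     (\<forall>f :: nat \<Rightarrow> 'c set. (\<forall>n. subgroup (f n) M \<and> f n \<subseteq> f (Suc n))
        \<longrightarrow> (\<exists>m. \<forall>k\<ge>m. f k = f m))"

definition artinian_group :: "'c monoid \<Rightarrow> bool" where
  "artinian_group M \<longleftrightarrow>
     (\<forall>f :: nat \<Rightarrow> 'c set. (\<forall>n. subgroup (f n) M \<and> f (Suc n) \<subseteq> f n)
        \<longrightarrow> (\<exists>m. \<forall>k\<ge>m. f k = f m))"

definition minimax_group :: "'c monoid \<Rightarrow> bool" where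
  "minimax_group M \<longleftrightarrow>
     (\<exists>(n::nat) (B :: nat \<Rightarrow> 'c set).
        B 0 = {\<one>\<^bsub>M\<^esub>} \<and> B n = carrier M \<and>
        (\<forall>i\<le>n. subgroup (B i) M) \<and>
        (\<forall>i<n. B i \<subseteq> B (Suc i) \<and>
           (noetherian_group ((M\<lparr>carrier := B (Suc i)\<rparr>) Mod (B i)) \<or>
            artinian_group ((M\<lparr>carrier := B (Suc i)\<rparr>) Mod (B i)))))"

definition ZG_module :: "('a, 'm) monoid_scheme \<Rightarrow> 'b monoid \<Rightarrow> ('a \<Rightarrow> 'b \<Rightarrow> 'b) \<Rightarrow> bool" where
  "ZG_module G A act \<longleftrightarrow> group G \<and> comm_group A \<and>
     (\<forall>g\<in>carrier G. act g \<in> hom A A) \<and>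
     (\<forall>a\<in>carrier A. act \<one>\<^bsub>G\<^esub> a = a) \<and>
     (\<forall>g\<in>carrier G. \<forall>h\<in>carrier G. \<forall>a\<in>carrier A. act (g \<otimes>\<^bsub>G\<^esub> h) a = act g (act h a))"

definition centralizer_mod :: "'b monoid \<Rightarrow> ('a \<Rightarrow> 'b \<Rightarrow> 'b) \<Rightarrow> 'a set \<Rightarrow> 'b set" where
  "centralizer_mod A act H = {a \<in> carrier A. \<forall>h\<in>H. act h a = a}"

definition Coc_mmx :: "('a, 'm) monoid_scheme \<Rightarrow> 'b monoid \<Rightarrow> ('a \<Rightarrow> 'b \<Rightarrow> 'b) \<Rightarrow> 'a set" where
  "Coc_mmx G A act = {x \<in> carrier G. minimax_group (A Mod centralizer_mod A act {x})}"

definition fin_gen_subgroup :: "('a, 'm) monoid_scheme \<Rightarrow> 'a set \<Rightarrow> bool" where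
  "fin_gen_subgroup G H \<longleftrightarrow> (\<exists>S. finite S \<and> S \<subseteq> carrier G \<and> H = generate G S)"

definition minimax_antifinitary :: "('a, 'm) monoid_scheme \<Rightarrow> 'b monoid \<Rightarrow> ('a \<Rightarrow> 'b \<Rightarrow> 'b) \<Rightarrow> bool" where
  "minimax_antifinitary G A act \<longleftrightarrow> ZG_module G A act \<and>
     (\<forall>H. subgroup H G \<and> H \<noteq> carrier G \<and> \<not> fin_gen_subgroup G H
        \<longrightarrow> minimax_group (A Mod centralizer_mod A act H)) \<and>
     \<not> minimax_group (A Mod centralizer_mod A act (carrier G))"

end

theory Submission
  imports Defs
begin

text \<open>For \<open>x \<in> H\<close> we have \<open>C\<^sub>A(H) \<subseteq> C\<^sub>A(x)\<close>, so \<open>A/C\<^sub>A(x)\<close> is a quotient of \<open>A/C\<^sub>A(H)\<close>.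
  If \<open>H\<close> were not finitely generated, \<open>A/C\<^sub>A(H)\<close> would be minimax by antifinitarity, hence so
  would be its quotient \<open>A/C\<^sub>A(x)\<close>; choosing \<open>x \<notin> Coc\<close> gives a contradiction.

  That quotients of minimax abelian groups are minimax is seen on subgroup lattices: by the
  correspondence theorem a series for \<open>A/N\<close> is a chain \<open>N = C\<^sub>0 \<le> \<dots> \<le> C\<^sub>n = A\<close> whose intervals
  \<open>[C\<^sub>i, C\<^sub>i\<^sub>+\<^sub>1]\<close> satisfy ACC or DCC, and for \<open>N \<le> M\<close> the chain \<open>C\<^sub>i M\<close> works for \<open>A/M\<close>, since
  by the modular law \<open>D \<mapsto> D \<inter> C\<^sub>i\<^sub>+\<^sub>1\<close> embeds \<open>[C\<^sub>i M, C\<^sub>i\<^sub>+\<^sub>1 M]\<close> into \<open>[C\<^sub>i, C\<^sub>i\<^sub>+\<^sub>1]\<close>.\<close>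

definition chains_stabilize :: "('x \<Rightarrow> 'x \<Rightarrow> bool) \<Rightarrow> 'x set \<Rightarrow> bool" where
  "chains_stabilize R P \<longleftrightarrow>
     (\<forall>f :: nat \<Rightarrow> 'x. (\<forall>n. f n \<in> P \<and> R (f n) (f (Suc n))) \<longrightarrow> (\<exists>m. \<forall>k\<ge>m. f k = f m))"

lemma noetherian_group_iff_chains_stabilize:
  "noetherian_group M \<longleftrightarrow> chains_stabilize (\<subseteq>) {H. subgroup H M}"
  unfolding noetherian_group_def chains_stabilize_def by auto

lemma artinian_group_iff_chains_stabilize:
  "artinian_group M \<longleftrightarrow> chains_stabilize (\<supseteq>) {H. subgroup H M}"
  unfolding artinian_group_def chains_stabilize_def by auto

lemma chains_stabilize_inj_on:
  assumes Q: "chains_stabilize S Q" and maps: "\<phi> ` P \<subseteq> Q"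
    and mono: "\<And>a b. a \<in> P \<Longrightarrow> b \<in> P \<Longrightarrow> R a b \<Longrightarrow> S (\<phi> a) (\<phi> b)"
    and inj: "inj_on \<phi> P"
  shows "chains_stabilize R P"
  unfolding chains_stabilize_def
proof (intro allI impI)
  fix f :: "nat \<Rightarrow> _" assume f: "\<forall>n. f n \<in> P \<and> R (f n) (f (Suc n))"
  then have "\<forall>n. \<phi> (f n) \<in> Q \<and> S (\<phi> (f n)) (\<phi> (f (Suc n)))"
    using maps mono by blast
  then obtain m where m: "\<forall>k\<ge>m. \<phi> (f k) = \<phi> (f m)"
    using Q unfolding chains_stabilize_def by (elim allE[of _ "\<phi> \<circ> f"]) auto
  have "\<forall>k\<ge>m. f k = f m"
    using m f inj_onD[OF inj] by blast
  then show "\<exists>m. \<forall>k\<ge>m. f k = f m" ..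
qed

lemma chains_stabilize_order_iso:
  assumes "\<phi> ` P \<subseteq> Q" "\<psi> ` Q \<subseteq> P"
    and "\<And>a. a \<in> P \<Longrightarrow> \<psi> (\<phi> a) = a" "\<And>b. b \<in> Q \<Longrightarrow> \<phi> (\<psi> b) = b"
    and "\<And>a b. a \<in> P \<Longrightarrow> b \<in> P \<Longrightarrow> R a b \<Longrightarrow> S (\<phi> a) (\<phi> b)"
    and "\<And>a b. a \<in> Q \<Longrightarrow> b \<in> Q \<Longrightarrow> S a b \<Longrightarrow> R (\<psi> a) (\<psi> b)"
  shows "chains_stabilize R P \<longleftrightarrow> chains_stabilize S Q"
proof
  have "inj_on \<psi> Q" by (rule inj_on_inverseI) (rule assms(4))
  then show "chains_stabilize R P \<Longrightarrow> chains_stabilize S Q"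
    using chains_stabilize_inj_on[of R P \<psi> Q S] assms(2,6) by blast
  have "inj_on \<phi> P" by (rule inj_on_inverseI) (rule assms(3))
  then show "chains_stabilize S Q \<Longrightarrow> chains_stabilize R P"
    using chains_stabilize_inj_on[of S Q \<phi> P R] assms(1,5) by blast
qed

definition subgroup_interval :: "('c, 'z) monoid_scheme \<Rightarrow> 'c set \<Rightarrow> 'c set \<Rightarrow> 'c set set" where
  "subgroup_interval G L U = {D. subgroup D G \<and> L \<subseteq> D \<and> D \<subseteq> U}"

lemma (in normal) image_rcos_Union:
  assumes "subgroup T (G Mod H)"
  shows "(\<lambda>x. H #> x) ` \<Union>T = T"
proof -
  have "T = (\<Union>a\<in>\<Union>T. {H #> a})"
    using factgroup_subgroup_union_factor[OF assms] unfolding RCOSETS_def by simp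
  then show ?thesis by blast
qed

lemma (in normal) Union_image_rcos:
  assumes D: "subgroup D G" and HD: "H \<subseteq> D"
  shows "\<Union>((\<lambda>x. H #> x) ` D) = D"
proof
  show "\<Union>((\<lambda>x. H #> x) ` D) \<subseteq> D"
  proof clarify
    fix d y assume d: "d \<in> D" and "y \<in> H #> d"
    then obtain h where "h \<in> H" "y = h \<otimes> d" unfolding r_coset_def by blast
    with d HD show "y \<in> D" using subgroup.m_closed[OF D] by blast
  qed
  show "D \<subseteq> \<Union>((\<lambda>x. H #> x) ` D)"
  proof
    fix d assume d: "d \<in> D"
    then have "d \<in> H #> d" by (intro rcos_self subgroup.mem_carrier[OF D] is_subgroup)
    with d show "d \<in> \<Union>((\<lambda>x. H #> x) ` D)" by blast
  qed
qed

lemma (in normal) subgroup_image_rcos: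
  assumes "subgroup D G"
  shows "subgroup ((\<lambda>x. H #> x) ` D) (G Mod H)"
proof -
  interpret group_hom G "G Mod H" "\<lambda>x. H #> x"
    by (simp add: factorgroup_is_group group_hom.intro group_hom_axioms.intro is_group r_coset_hom_Mod)
  show ?thesis by (rule subgroup_img_is_subgroup[OF assms])
qed

lemma (in normal) chains_stabilize_FactGroup_interval_iff:
  assumes B: "subgroup B (G Mod H)" and B': "subgroup B' (G Mod H)"
  shows "chains_stabilize (\<subseteq>) (subgroup_interval (G Mod H) B B') \<longleftrightarrow>
           chains_stabilize (\<subseteq>) (subgroup_interval G (\<Union>B) (\<Union>B'))"
    and "chains_stabilize (\<supseteq>) (subgroup_interval (G Mod H) B B') \<longleftrightarrow>
           chains_stabilize (\<supseteq>) (subgroup_interval G (\<Union>B) (\<Union>B'))"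
proof -
  let ?img = "\<lambda>D. (\<lambda>x. H #> x) ` D"
  have to_G: "Union ` subgroup_interval (G Mod H) B B' \<subseteq> subgroup_interval G (\<Union>B) (\<Union>B')"
    by (auto simp: subgroup_interval_def intro: factgroup_subgroup_union_subgroup)
  have to_Mod: "?img ` subgroup_interval G (\<Union>B) (\<Union>B') \<subseteq> subgroup_interval (G Mod H) B B'"
  proof clarify
    fix D assume "D \<in> subgroup_interval G (\<Union>B) (\<Union>B')"
    then have D: "subgroup D G" "\<Union>B \<subseteq> D" "D \<subseteq> \<Union>B'" by (auto simp: subgroup_interval_def)
    have "B \<subseteq> ?img D" "?img D \<subseteq> B'"
      using image_mono[OF D(2), of "\<lambda>x. H #> x"] image_mono[OF D(3), of "\<lambda>x. H #> x"]
      by (simp_all add: image_rcos_Union B B')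
    with subgroup_image_rcos[OF D(1)]
    show "?img D \<in> subgroup_interval (G Mod H) B B'" by (simp add: subgroup_interval_def)
  qed
  have img_Union: "?img (\<Union>T) = T" if "T \<in> subgroup_interval (G Mod H) B B'" for T
    using that by (simp add: subgroup_interval_def image_rcos_Union)
  have Union_img: "\<Union>(?img D) = D" if "D \<in> subgroup_interval G (\<Union>B) (\<Union>B')" for D
  proof -
    have "H \<in> B"
      using subgroup.one_closed[OF B] by simp
    with that show ?thesis
      using Union_image_rcos by (auto simp: subgroup_interval_def)
  qed
  show "chains_stabilize (\<subseteq>) (subgroup_interval (G Mod H) B B') \<longleftrightarrow>
           chains_stabilize (\<subseteq>) (subgroup_interval G (\<Union>B) (\<Union>B'))"
    and "chains_stabilize (\<supseteq>) (subgroup_interval (G Mod H) B B') \<longleftrightarrow>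
           chains_stabilize (\<supseteq>) (subgroup_interval G (\<Union>B) (\<Union>B'))"
    by (rule chains_stabilize_order_iso[OF to_G to_Mod img_Union Union_img]; blast)+
qed

lemma (in group) chains_stabilize_factor_subgroups_iff:
  assumes L: "L \<lhd> G" and U: "subgroup U G" and LU: "L \<subseteq> U"
  shows "chains_stabilize (\<subseteq>) {T. subgroup T ((G\<lparr>carrier := U\<rparr>) Mod L)} \<longleftrightarrow>
           chains_stabilize (\<subseteq>) (subgroup_interval G L U)"
    and "chains_stabilize (\<supseteq>) {T. subgroup T ((G\<lparr>carrier := U\<rparr>) Mod L)} \<longleftrightarrow>
           chains_stabilize (\<supseteq>) (subgroup_interval G L U)"
proof -
  let ?U = "G\<lparr>carrier := U\<rparr>"
  interpret U: normal L ?U by (rule normal_restrict_supergroup[OF U L LU])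
  have "{T. subgroup T (?U Mod L)} = subgroup_interval (?U Mod L) {L} (carrier (?U Mod L))"
    using subgroup.one_closed subgroup.subset by (fastforce simp: subgroup_interval_def)
  moreover have "\<Union>(carrier (?U Mod L)) = U"
    using U.Union_image_rcos[OF U.subgroup_self] LU by (simp add: carrier_FactGroup)
  moreover have "subgroup_interval ?U L U = subgroup_interval G L U"
    using subgroup.subset subgroup_incl[OF _ U] incl_subgroup[OF U]
    by (fastforce simp: subgroup_interval_def)
  moreover note U.chains_stabilize_FactGroup_interval_iff[OF
        group.triv_subgroup[OF U.factorgroup_is_group] group.subgroup_self[OF U.factorgroup_is_group]]
  ultimately show "chains_stabilize (\<subseteq>) {T. subgroup T (?U Mod L)} \<longleftrightarrow>
           chains_stabilize (\<subseteq>) (subgroup_interval G L U)"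
    and "chains_stabilize (\<supseteq>) {T. subgroup T (?U Mod L)} \<longleftrightarrow>
           chains_stabilize (\<supseteq>) (subgroup_interval G L U)"
    by simp_all
qed

lemma (in group) subset_set_mult_right:
  assumes "subgroup K G" "H \<subseteq> carrier G"
  shows "H \<subseteq> H <#> K"
proof
  fix h assume "h \<in> H"
  with assms have "h = h \<otimes> \<one>" "\<one> \<in> K" by (auto intro: subgroup.one_closed)
  with \<open>h \<in> H\<close> show "h \<in> H <#> K" unfolding set_mult_def by blast
qed

lemma (in group) subset_set_mult_left:
  assumes "subgroup H G" "K \<subseteq> carrier G"
  shows "K \<subseteq> H <#> K"
proof
  fix k assume "k \<in> K"
  with assms have "k = \<one> \<otimes> k" "\<one> \<in> H" by (auto intro: subgroup.one_closed)
  with \<open>k \<in> K\<close> show "k \<in> H <#> K" unfolding set_mult_def by blast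
qed

lemma (in group) set_mult_Int_modular:
  assumes D: "subgroup D G" and E: "E \<subseteq> carrier G" and M: "subgroup M G" and MD: "M \<subseteq> D"
  shows "(D \<inter> E) <#> M = D \<inter> (E <#> M)"
proof
  show "(D \<inter> E) <#> M \<subseteq> D \<inter> (E <#> M)"
    using MD subgroup.m_closed[OF D] by (auto simp: set_mult_def)
  show "D \<inter> (E <#> M) \<subseteq> (D \<inter> E) <#> M"
  proof clarify
    fix x assume x: "x \<in> D" "x \<in> E <#> M"
    then obtain e m where em: "e \<in> E" "m \<in> M" "x = e \<otimes> m" unfolding set_mult_def by blast
    with E M have "e = x \<otimes> inv m" by (auto simp: m_assoc subgroup.mem_carrier)
    moreover have "x \<otimes> inv m \<in> D"
      using x(1) em(2) MD subgroup.m_closed[OF D] subgroup.m_inv_closed[OF D] by blast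
    ultimately show "x \<in> (D \<inter> E) <#> M"
      using em unfolding set_mult_def by blast
  qed
qed

lemma (in comm_group) chains_stabilize_interval_set_mult:
  assumes C: "subgroup C G" and C': "subgroup C' G" and M: "subgroup M G" and CC': "C \<subseteq> C'"
  shows "chains_stabilize (\<subseteq>) (subgroup_interval G C C') \<Longrightarrow>
           chains_stabilize (\<subseteq>) (subgroup_interval G (C <#> M) (C' <#> M))"
    and "chains_stabilize (\<supseteq>) (subgroup_interval G C C') \<Longrightarrow>
           chains_stabilize (\<supseteq>) (subgroup_interval G (C <#> M) (C' <#> M))"
proof -
  let ?I = "subgroup_interval G (C <#> M) (C' <#> M)"
  have maps: "(\<lambda>D. D \<inter> C') ` ?I \<subseteq> subgroup_interval G C C'"
    using CC' subset_set_mult_right[OF M subgroup.subset[OF C]] subgroups_Inter_pair[OF _ C']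
    by (auto simp: subgroup_interval_def)
  have "(D \<inter> C') <#> M = D" if "D \<in> ?I" for D
    using that set_mult_Int_modular[OF _ subgroup.subset[OF C'] M]
      subset_set_mult_left[OF C subgroup.subset[OF M]]
    by (auto simp: subgroup_interval_def)
  then have "inj_on (\<lambda>D. D \<inter> C') ?I"
    by (rule inj_on_inverseI)
  with maps show "chains_stabilize (\<subseteq>) (subgroup_interval G C C') \<Longrightarrow> chains_stabilize (\<subseteq>) ?I"
    and "chains_stabilize (\<supseteq>) (subgroup_interval G C C') \<Longrightarrow> chains_stabilize (\<supseteq>) ?I"
    by (auto elim!: chains_stabilize_inj_on)
qed

definition has_minimax_series :: "('c, 'z) monoid_scheme \<Rightarrow> 'c set \<Rightarrow> bool" where
  "has_minimax_series G N \<longleftrightarrow>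
     (\<exists>(n::nat) (C :: nat \<Rightarrow> 'c set).
        C 0 = N \<and> C n = carrier G \<and> (\<forall>i\<le>n. subgroup (C i) G) \<and>
        (\<forall>i<n. C i \<subseteq> C (Suc i) \<and>
           (chains_stabilize (\<subseteq>) (subgroup_interval G (C i) (C (Suc i))) \<or>
            chains_stabilize (\<supseteq>) (subgroup_interval G (C i) (C (Suc i))))))"

lemma (in comm_group) has_minimax_series_mono:
  assumes N: "has_minimax_series G N" and M: "subgroup M G" and NM: "N \<subseteq> M"
  shows "has_minimax_series G M"
proof -
  obtain n C where C0: "C 0 = N" and Cn: "C n = carrier G" and C: "\<forall>i\<le>n. subgroup (C i) G"
    and factors: "\<forall>i<n. C i \<subseteq> C (Suc i) \<and>
           (chains_stabilize (\<subseteq>) (subgroup_interval G (C i) (C (Suc i))) \<or>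
            chains_stabilize (\<supseteq>) (subgroup_interval G (C i) (C (Suc i))))"
    using N unfolding has_minimax_series_def by blast
  define D where "D i = C i <#> M" for i
  have "D 0 = M"
  proof
    show "D 0 \<subseteq> M"
      using NM subgroup.m_closed[OF M] by (auto simp: D_def C0 set_mult_def)
    show "M \<subseteq> D 0"
      unfolding D_def using subset_set_mult_left[OF _ subgroup.subset[OF M]] C by simp
  qed
  moreover have "D n = carrier G"
    unfolding D_def Cn by (rule set_mult_carrier_idem[OF M])
  moreover have "\<forall>i\<le>n. subgroup (D i) G"
    unfolding D_def using C mult_subgroups[OF _ M] by blast
  moreover have "\<forall>i<n. D i \<subseteq> D (Suc i) \<and>
           (chains_stabilize (\<subseteq>) (subgroup_interval G (D i) (D (Suc i))) \<or>
            chains_stabilize (\<supseteq>) (subgroup_interval G (D i) (D (Suc i))))"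
  proof (intro allI impI)
    fix i assume i: "i < n"
    then have Ci: "subgroup (C i) G" "subgroup (C (Suc i)) G" "C i \<subseteq> C (Suc i)"
      using C factors by auto
    with i factors show "D i \<subseteq> D (Suc i) \<and>
           (chains_stabilize (\<subseteq>) (subgroup_interval G (D i) (D (Suc i))) \<or>
            chains_stabilize (\<supseteq>) (subgroup_interval G (D i) (D (Suc i))))"
      unfolding D_def using chains_stabilize_interval_set_mult[OF Ci(1,2) M Ci(3)]
        mono_set_mult[OF Ci(3) order_refl] by blast
  qed
  ultimately show ?thesis
    unfolding has_minimax_series_def by blast
qed

lemma (in comm_group) FactGroup_factor_chains_iff:
  assumes N: "subgroup N G" and B: "subgroup B (G Mod N)" and B': "subgroup B' (G Mod N)"
    and BB': "B \<subseteq> B'"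
  shows "noetherian_group (((G Mod N)\<lparr>carrier := B'\<rparr>) Mod B) \<longleftrightarrow>
           chains_stabilize (\<subseteq>) (subgroup_interval G (\<Union>B) (\<Union>B'))"
    and "artinian_group (((G Mod N)\<lparr>carrier := B'\<rparr>) Mod B) \<longleftrightarrow>
           chains_stabilize (\<supseteq>) (subgroup_interval G (\<Union>B) (\<Union>B'))"
proof -
  interpret N: normal N G by (rule subgroup_imp_normal[OF N])
  interpret Q: comm_group "G Mod N" by (rule abelian_FactGroup[OF N])
  note factor = Q.chains_stabilize_factor_subgroups_iff[OF Q.subgroup_imp_normal[OF B] B' BB']
  show "noetherian_group (((G Mod N)\<lparr>carrier := B'\<rparr>) Mod B) \<longleftrightarrow>
           chains_stabilize (\<subseteq>) (subgroup_interval G (\<Union>B) (\<Union>B'))"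
    and "artinian_group (((G Mod N)\<lparr>carrier := B'\<rparr>) Mod B) \<longleftrightarrow>
           chains_stabilize (\<supseteq>) (subgroup_interval G (\<Union>B) (\<Union>B'))"
    using factor N.chains_stabilize_FactGroup_interval_iff[OF B B']
    by (simp_all add: noetherian_group_iff_chains_stabilize artinian_group_iff_chains_stabilize)
qed

lemma (in comm_group) minimax_FactGroup_imp_has_minimax_series:
  assumes N: "subgroup N G" and mm: "minimax_group (G Mod N)"
  shows "has_minimax_series G N"
proof -
  interpret N: normal N G by (rule subgroup_imp_normal[OF N])
  obtain n B where B0: "B 0 = {\<one>\<^bsub>G Mod N\<^esub>}" and Bn: "B n = carrier (G Mod N)"
    and B: "\<forall>i\<le>n. subgroup (B i) (G Mod N)"
    and factors: "\<forall>i<n. B i \<subseteq> B (Suc i) \<and>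
           (noetherian_group (((G Mod N)\<lparr>carrier := B (Suc i)\<rparr>) Mod (B i)) \<or>
            artinian_group (((G Mod N)\<lparr>carrier := B (Suc i)\<rparr>) Mod (B i)))"
    using mm unfolding minimax_group_def by blast
  have "\<Union>(B 0) = N"
    using B0 by simp
  moreover have "\<Union>(B n) = carrier G"
    using Bn N.Union_image_rcos[OF subgroup_self N.subset] by (simp add: carrier_FactGroup)
  moreover have "\<forall>i\<le>n. subgroup (\<Union>(B i)) G"
    using B N.factgroup_subgroup_union_subgroup by blast
  moreover have "\<forall>i<n. \<Union>(B i) \<subseteq> \<Union>(B (Suc i)) \<and>
           (chains_stabilize (\<subseteq>) (subgroup_interval G (\<Union>(B i)) (\<Union>(B (Suc i)))) \<or>
            chains_stabilize (\<supseteq>) (subgroup_interval G (\<Union>(B i)) (\<Union>(B (Suc i)))))"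
  proof (intro allI impI)
    fix i assume i: "i < n"
    then have Bi: "subgroup (B i) (G Mod N)" "subgroup (B (Suc i)) (G Mod N)" "B i \<subseteq> B (Suc i)"
      using B factors by auto
    with i factors show "\<Union>(B i) \<subseteq> \<Union>(B (Suc i)) \<and>
           (chains_stabilize (\<subseteq>) (subgroup_interval G (\<Union>(B i)) (\<Union>(B (Suc i)))) \<or>
            chains_stabilize (\<supseteq>) (subgroup_interval G (\<Union>(B i)) (\<Union>(B (Suc i)))))"
      using FactGroup_factor_chains_iff[OF N Bi] Union_mono[OF Bi(3)] by blast
  qed
  ultimately show ?thesis
    unfolding has_minimax_series_def by (intro exI[of _ n] exI[of _ "\<lambda>i. \<Union>(B i)"]) blast
qed

lemma (in comm_group) has_minimax_series_imp_minimax_FactGroup: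
  assumes N: "subgroup N G" and series: "has_minimax_series G N"
  shows "minimax_group (G Mod N)"
proof -
  interpret N: normal N G by (rule subgroup_imp_normal[OF N])
  obtain n C where C0: "C 0 = N" and Cn: "C n = carrier G" and C: "\<forall>i\<le>n. subgroup (C i) G"
    and factors: "\<forall>i<n. C i \<subseteq> C (Suc i) \<and>
           (chains_stabilize (\<subseteq>) (subgroup_interval G (C i) (C (Suc i))) \<or>
            chains_stabilize (\<supseteq>) (subgroup_interval G (C i) (C (Suc i))))"
    using series unfolding has_minimax_series_def by blast
  define B where "B i = (\<lambda>x. N #> x) ` C i" for i
  have N_le: "N \<subseteq> C i" if "i \<le> n" for i
    using that
  proof (induction i)
    case (Suc i)
    then have "N \<subseteq> C i" "C i \<subseteq> C (Suc i)"
      using factors by simp_all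
    then show ?case by (rule order_trans)
  qed (simp add: C0)
  have Union_B: "\<Union>(B i) = C i" if "i \<le> n" for i
    unfolding B_def using C that N_le[OF that] by (simp add: N.Union_image_rcos)
  have "(\<lambda>x. N #> x) ` N = (\<lambda>_. N) ` N"
    using N.rcos_const[OF is_group] by (intro image_cong) auto
  also have "\<dots> = {N}"
    using N.one_closed by (rule image_constant)
  finally have B0: "B 0 = {\<one>\<^bsub>G Mod N\<^esub>}"
    by (simp add: B_def C0)
  have Bn: "B n = carrier (G Mod N)"
    unfolding B_def Cn by (simp add: carrier_FactGroup)
  have B: "\<forall>i\<le>n. subgroup (B i) (G Mod N)"
    unfolding B_def using C by (auto intro: N.subgroup_image_rcos)
  have B_factors: "\<forall>i<n. B i \<subseteq> B (Suc i) \<and>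
           (noetherian_group (((G Mod N)\<lparr>carrier := B (Suc i)\<rparr>) Mod (B i)) \<or>
            artinian_group (((G Mod N)\<lparr>carrier := B (Suc i)\<rparr>) Mod (B i)))"
  proof (intro allI impI)
    fix i assume i: "i < n"
    then have Bi: "subgroup (B i) (G Mod N)" "subgroup (B (Suc i)) (G Mod N)" "B i \<subseteq> B (Suc i)"
      using B factors unfolding B_def by (simp_all add: image_mono)
    have "chains_stabilize (\<subseteq>) (subgroup_interval G (C i) (C (Suc i))) \<or>
          chains_stabilize (\<supseteq>) (subgroup_interval G (C i) (C (Suc i)))"
      using factors i by blast
    then show "B i \<subseteq> B (Suc i) \<and>
           (noetherian_group (((G Mod N)\<lparr>carrier := B (Suc i)\<rparr>) Mod (B i)) \<or>
            artinian_group (((G Mod N)\<lparr>carrier := B (Suc i)\<rparr>) Mod (B i)))"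
      using Bi(3) FactGroup_factor_chains_iff[OF N Bi] Union_B[of i] Union_B[of "Suc i"] i
      by simp
  qed
  show ?thesis
    unfolding minimax_group_def
    by (intro exI[of _ n] exI[of _ B] conjI) (fact B0 Bn B B_factors)+
qed

corollary (in comm_group) minimax_FactGroup_mono:
  assumes N: "subgroup N G" and M: "subgroup M G" and NM: "N \<subseteq> M"
    and "minimax_group (G Mod N)"
  shows "minimax_group (G Mod M)"
  using has_minimax_series_imp_minimax_FactGroup[OF M has_minimax_series_mono[OF
        minimax_FactGroup_imp_has_minimax_series[OF N assms(4)] M NM]] .

lemma subgroup_centralizer_mod:
  assumes A: "ZG_module G A act" and S: "S \<subseteq> carrier G"
  shows "subgroup (centralizer_mod A act S) A"
proof -
  interpret A: comm_group A
    using A by (simp add: ZG_module_def)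
  have "\<forall>g\<in>carrier G. act g \<in> hom A A"
    using A by (simp add: ZG_module_def)
  then have hom: "group_hom A A (act h)" if "h \<in> S" for h
    using S that by (intro group_hom.intro group_hom_axioms.intro A.group_axioms) blast
  show ?thesis
  proof (rule A.subgroupI)
    show "centralizer_mod A act S \<subseteq> carrier A"
      by (simp add: centralizer_mod_def)
    have "\<one>\<^bsub>A\<^esub> \<in> centralizer_mod A act S"
      using group_hom.hom_one[OF hom] by (simp add: centralizer_mod_def)
    then show "centralizer_mod A act S \<noteq> {}"
      by blast
    show "inv\<^bsub>A\<^esub> a \<in> centralizer_mod A act S" if "a \<in> centralizer_mod A act S" for a
      using that group_hom.hom_inv[OF hom] by (simp add: centralizer_mod_def)
    show "a \<otimes>\<^bsub>A\<^esub> b \<in> centralizer_mod A act S"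
      if "a \<in> centralizer_mod A act S" "b \<in> centralizer_mod A act S" for a b
      using that group_hom.hom_mult[OF hom] by (simp add: centralizer_mod_def)
  qed
qed

theorem lemma2p8:
  fixes G :: "('a, 'm) monoid_scheme" and A :: "'b monoid" and act :: "'a \<Rightarrow> 'b \<Rightarrow> 'b"
  assumes "group G"
    and "minimax_antifinitary G A act"
    and "subgroup H G" and "H \<noteq> carrier G"
    and "\<not> H \<subseteq> Coc_mmx G A act"
  shows "fin_gen_subgroup G H"
proof -
  have module: "ZG_module G A act"
    and antifinitary: "\<forall>H. subgroup H G \<and> H \<noteq> carrier G \<and> \<not> fin_gen_subgroup G H
        \<longrightarrow> minimax_group (A Mod centralizer_mod A act H)"
    using assms(2) by (simp_all add: minimax_antifinitary_def)
  interpret A: comm_group A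
    using module by (simp add: ZG_module_def)
  obtain x where x: "x \<in> H" "x \<notin> Coc_mmx G A act"
    using assms(5) by blast
  have xG: "x \<in> carrier G"
    using x(1) subgroup.subset[OF assms(3)] by blast
  with x(2) have not_minimax_x: "\<not> minimax_group (A Mod centralizer_mod A act {x})"
    by (simp add: Coc_mmx_def)
  have "centralizer_mod A act H \<subseteq> centralizer_mod A act {x}"
    using x(1) by (auto simp: centralizer_mod_def)
  moreover have "subgroup (centralizer_mod A act {x}) A"
    using xG by (intro subgroup_centralizer_mod[OF module]) simp
  ultimately have "\<not> minimax_group (A Mod centralizer_mod A act H)"
    using A.minimax_FactGroup_mono[OF subgroup_centralizer_mod[OF module subgroup.subset[OF assms(3)]]]
      not_minimax_x by blast
  with assms(3,4) show ?thesis
    using antifinitary[rule_format, of H] by blast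
qed

end
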